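(* Let $G$ be a connected graph on $n=|G|\ge 2$ vertices and let $w\in V(G)$. If for every $1\le i\le \mathrm{diam}(G)$ the set $V_i(w)=\{v\in V(G)\setminus\{w\} : d(v,w)=i\}$ has exactly one element, then $$ar_w(G)=\frac{2}{n(n-1)}\sum_{(u,v)\in V_p} r_w(u,v).$$
   Context: Graphs are finite, simple and connected; $d(u,v)$ denotes the shortest-path distance and $\mathrm{diam}(G)$ the diameter. $V_p$ denotes the set of all unordered pairs $(u,v)$ of distinct vertices. A vertex $x$ resolves the pair $(u,v)$ if $d(x,u)\neq d(x,v)$. For $(u,v)\in V_p$, $R(u,v)$ is the set of all vertices resolving $(u,v)$. The resolving share of a vertex $w$ for $(u,v)$ is $r_w(u,v)=\frac{1}{|R(u,v)|}$ if $w$ resolves $u$ and $v$, and $r_w(u,v)=0$ otherwise. For a vertex $w$, $R(w)$ is the set of pairs in $V_p$ resolved by $w$, and the average resolving share of $w$ is $ar_w(G)=\frac{1}{|R(w)|}\sum_{(u,v)\in R(w)} r_w(u,v)$. *)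

theory Defs
  imports Complex_Main
begin

definition simple_graph :: "'a set \<Rightarrow> ('a \<Rightarrow> 'a \<Rightarrow> bool) \<Rightarrow> bool" where
  "simple_graph V E \<longleftrightarrow> finite V \<and> (\<forall>x y. E x y \<longrightarrow> x \<in> V \<and> y \<in> V)
     \<and> (\<forall>x y. E x y \<longrightarrow> E y x) \<and> (\<forall>x. \<not> E x x)"

definition walk_len :: "('a \<Rightarrow> 'a \<Rightarrow> bool) \<Rightarrow> 'a \<Rightarrow> 'a \<Rightarrow> nat \<Rightarrow> bool" where
  "walk_len E u v k \<longleftrightarrow> (\<exists>p :: nat \<Rightarrow> 'a. p 0 = u \<and> p k = v \<and> (\<forall>i<k. E (p i) (p (Suc i))))"

definition connected_graph :: "'a set \<Rightarrow> ('a \<Rightarrow> 'a \<Rightarrow> bool) \<Rightarrow> bool" where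
  "connected_graph V E \<longleftrightarrow> (\<forall>u\<in>V. \<forall>v\<in>V. \<exists>k. walk_len E u v k)"

definition dist :: "('a \<Rightarrow> 'a \<Rightarrow> bool) \<Rightarrow> 'a \<Rightarrow> 'a \<Rightarrow> nat" where
  "dist E u v = (LEAST k. walk_len E u v k)"

definition diam :: "'a set \<Rightarrow> ('a \<Rightarrow> 'a \<Rightarrow> bool) \<Rightarrow> nat" where
  "diam V E = Max {dist E u v | u v. u \<in> V \<and> v \<in> V}"

definition vpairs :: "'a set \<Rightarrow> 'a set set" where
  "vpairs V = {{u, v} | u v. u \<in> V \<and> v \<in> V \<and> u \<noteq> v}"

definition resolves :: "('a \<Rightarrow> 'a \<Rightarrow> bool) \<Rightarrow> 'a \<Rightarrow> 'a set \<Rightarrow> bool" where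
  "resolves E x P \<longleftrightarrow> (\<exists>u v. P = {u, v} \<and> dist E x u \<noteq> dist E x v)"

definition resolving_set_of_pair :: "'a set \<Rightarrow> ('a \<Rightarrow> 'a \<Rightarrow> bool) \<Rightarrow> 'a set \<Rightarrow> 'a set" where
  "resolving_set_of_pair V E P = {x \<in> V. resolves E x P}"

definition rshare :: "'a set \<Rightarrow> ('a \<Rightarrow> 'a \<Rightarrow> bool) \<Rightarrow> 'a \<Rightarrow> 'a set \<Rightarrow> real" where
  "rshare V E w P = (if resolves E w P then 1 / real (card (resolving_set_of_pair V E P)) else 0)"

definition resolved_pairs :: "'a set \<Rightarrow> ('a \<Rightarrow> 'a \<Rightarrow> bool) \<Rightarrow> 'a \<Rightarrow> 'a set set" where
  "resolved_pairs V E w = {P \<in> vpairs V. resolves E w P}"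

definition avg_rshare :: "'a set \<Rightarrow> ('a \<Rightarrow> 'a \<Rightarrow> bool) \<Rightarrow> 'a \<Rightarrow> real" where
  "avg_rshare V E w = (1 / real (card (resolved_pairs V E w))) *
      (\<Sum>P\<in>resolved_pairs V E w. rshare V E w P)"

end

theory Submission
  imports Defs
begin

text \<open>If every distance layer around \<open>w\<close> is a single vertex, then \<open>dist E w\<close> is injective on
  \<open>V\<close>, so \<open>w\<close> resolves every pair: \<open>R(w) = V\<^sub>p\<close>. The average over \<open>R(w)\<close> is then the
  sum over \<open>V\<^sub>p\<close> divided by \<open>|V\<^sub>p| = n(n-1)/2\<close>.\<close>

lemma walk_len_sym:
  assumes "simple_graph V E" and "walk_len E u v k"
  shows "walk_len E v u k"
proof -
  obtain p where p: "p 0 = u" "p k = v" "\<forall>i<k. E (p i) (p (Suc i))"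
    using assms(2) unfolding walk_len_def by blast
  have "E (p (k - i)) (p (k - Suc i))" if "i < k" for i
  proof -
    have "E (p (k - Suc i)) (p (Suc (k - Suc i)))" using p(3) that by simp
    moreover have "Suc (k - Suc i) = k - i" using that by simp
    ultimately show ?thesis using assms(1) unfolding simple_graph_def by metis
  qed
  then show ?thesis
    unfolding walk_len_def using p by (intro exI[of _ "\<lambda>i. p (k - i)"]) auto
qed

lemma dist_sym:
  assumes "simple_graph V E"
  shows "dist E u v = dist E v u"
proof -
  have "walk_len E u v = walk_len E v u" using walk_len_sym[OF assms] by blast
  then show ?thesis unfolding dist_def by simp
qed

lemma walk_len_dist:
  assumes "connected_graph V E" "u \<in> V" "v \<in> V"
  shows "walk_len E u v (dist E u v)"
proof -
  obtain k where "walk_len E u v k" using assms unfolding connected_graph_def by blast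
  then show ?thesis unfolding dist_def by (rule LeastI)
qed

lemma dist_self [simp]: "dist E u u = 0"
  unfolding dist_def walk_len_def by (rule Least_eq_0) auto

lemma dist_eq_0_iff:
  assumes "connected_graph V E" "u \<in> V" "v \<in> V"
  shows "dist E u v = 0 \<longleftrightarrow> u = v"
  using walk_len_dist[OF assms] unfolding walk_len_def by auto

lemma dist_le_diam:
  assumes "finite V" "u \<in> V" "v \<in> V"
  shows "dist E u v \<le> diam V E"
proof -
  have "{dist E u v | u v. u \<in> V \<and> v \<in> V} = (\<lambda>(a, b). dist E a b) ` (V \<times> V)" by auto
  then show ?thesis
    unfolding diam_def using assms by (intro Max_ge) auto
qed

lemma inj_on_dist_if_distance_layers_singleton:
  assumes sg: "simple_graph V E" and conn: "connected_graph V E" and "w \<in> V"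
    and layers: "\<forall>i. 1 \<le> i \<and> i \<le> diam V E \<longrightarrow> card {v \<in> V - {w}. dist E v w = i} = 1"
  shows "inj_on (dist E w) V"
proof
  fix u v assume uv: "u \<in> V" "v \<in> V" and eq: "dist E w u = dist E w v"
  define i where "i = dist E u w"
  have eq': "dist E v w = i" using eq dist_sym[OF sg] i_def by metis
  show "u = v"
  proof (cases "i = 0")
    case True
    then show ?thesis
      using eq' i_def dist_eq_0_iff[OF conn] uv \<open>w \<in> V\<close> by metis
  next
    case False
    have fin: "finite V" using sg unfolding simple_graph_def by blast
    have "u \<noteq> w" "v \<noteq> w" using False i_def eq' by auto
    then have "{u, v} \<subseteq> {x \<in> V - {w}. dist E x w = i}" using uv i_def eq' by auto
    moreover have "card {x \<in> V - {w}. dist E x w = i} = 1"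
      using layers False dist_le_diam[OF fin uv(1) \<open>w \<in> V\<close>] i_def by simp
    ultimately have "card {u, v} \<le> 1"
      by (metis (no_types, lifting) card_mono fin finite_Diff finite_subset mem_Collect_eq subsetI)
    then show ?thesis by (cases "u = v") auto
  qed
qed

lemma resolved_pairs_eq_vpairs:
  assumes "inj_on (dist E w) V"
  shows "resolved_pairs V E w = vpairs V"
proof -
  have "resolves E w {u, v}" if "u \<in> V" "v \<in> V" "u \<noteq> v" for u v
    using assms that unfolding resolves_def inj_on_def by blast
  then show ?thesis unfolding resolved_pairs_def vpairs_def by blast
qed

lemma card_vpairs:
  assumes "finite V"
  shows "real (card (vpairs V)) = real (card V) * (real (card V) - 1) / 2"
proof -
  have "vpairs V = {A. A \<subseteq> V \<and> card A = 2}"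
    unfolding vpairs_def by (auto simp: card_2_iff)
  then have "card (vpairs V) = card V choose 2" using n_subsets[OF assms] by simp
  moreover have "even (card V * (card V - 1))" by (cases "card V") simp_all
  ultimately have "2 * card (vpairs V) = card V * (card V - 1)" by (simp add: choose_two)
  then have "2 * real (card (vpairs V)) = real (card V * (card V - 1))" by (metis of_nat_mult of_nat_numeral)
  then show ?thesis by (cases "card V") (auto simp: algebra_simps)
qed

theorem proposition3p4:
  fixes V :: "'a set" and E :: "'a \<Rightarrow> 'a \<Rightarrow> bool" and w :: 'a
  assumes "simple_graph V E"
    and "connected_graph V E"
    and "card V \<ge> 2"
    and "w \<in> V"
    and "\<forall>i. 1 \<le> i \<and> i \<le> diam V E \<longrightarrow> card {v \<in> V - {w}. dist E v w = i} = 1"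
  shows "avg_rshare V E w =
           2 / (real (card V) * (real (card V) - 1)) * (\<Sum>P\<in>vpairs V. rshare V E w P)"
proof -
  have "finite V" using assms(1) unfolding simple_graph_def by blast
  have "resolved_pairs V E w = vpairs V"
    using inj_on_dist_if_distance_layers_singleton[OF assms(1,2,4,5)] by (rule resolved_pairs_eq_vpairs)
  then show ?thesis
    unfolding avg_rshare_def by (simp add: card_vpairs[OF \<open>finite V\<close>])
qed

end
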